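(* Under the setting of the context, suppose $\lambda\mapsto q_\lambda$ is differentiable at $\lambda=0$, $f_0,f_1$ are continuous at $q_0$, and $p_0f_0(q_0)+p_1f_1(q_0)>0$. Then $$\frac{dq_\lambda}{d\lambda}\Big|_{\lambda=0}=\frac{p_1f_1(q_0)}{p_0f_0(q_0)+p_1f_1(q_0)}.$$
   Context: $(X,Y)$ is a random pair on $\mathcal{X}\times[C]$. A classifier gives predicted class $\hat y(x)\in[C]$; a map $g:[C]\to[G]$ partitions classes into groups; $d(y,y'):=\mathbb{I}\{g(y)\ne g(y')\}$. For a score $s(x,y)$ and $\lambda\ge0$, $s_\lambda(x,y):=s(x,y)+\lambda d(y,\hat y(x))$. $\mathcal{Y}_0(x):=\{y: d(y,\hat y(x))=0\}$, $\mathcal{Y}_1(x):=\{y:d(y,\hat y(x))\ne0\}$; $p_0:=\mathbb{P}(Y\in\mathcal{Y}_0(X))\in(0,1)$, $p_1:=1-p_0$; $F_z(t):=\mathbb{P}(s(X,Y)\le t\mid Y\in\mathcal{Y}_z(X))$ for $z\in\{0,1\}$, assumed absolutely continuous with density $f_z=F_z'$. For small $\lambda\ge 0$, $q_\lambda$ satisfies $\mathbb{P}(s_\lambda(X,Y)\le q_\lambda)=1-\alpha$ for a fixed $\alpha\in(0,1)$. *)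

theory Defs
  imports "HOL-Probability.Probability"
begin

definition dgrp :: "(nat \<Rightarrow> nat) \<Rightarrow> nat \<Rightarrow> nat \<Rightarrow> real" where
  "dgrp g y y' = (if g y \<noteq> g y' then 1 else 0)"

definition slam :: "('x \<Rightarrow> nat \<Rightarrow> real) \<Rightarrow> ('x \<Rightarrow> nat) \<Rightarrow> (nat \<Rightarrow> nat) \<Rightarrow> real \<Rightarrow> 'x \<Rightarrow> nat \<Rightarrow> real" where
  "slam s yhat g lam x y = s x y + lam * dgrp g y (yhat x)"

definition Yset :: "nat \<Rightarrow> ('x \<Rightarrow> nat) \<Rightarrow> (nat \<Rightarrow> nat) \<Rightarrow> nat \<Rightarrow> 'x \<Rightarrow> nat set" where
  "Yset C yhat g z x = (if z = 0 then {y \<in> {1..C}. dgrp g y (yhat x) = 0}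
                                 else {y \<in> {1..C}. dgrp g y (yhat x) \<noteq> 0})"

definition Zev :: "'a measure \<Rightarrow> ('a \<Rightarrow> 'x) \<Rightarrow> ('a \<Rightarrow> nat) \<Rightarrow> nat \<Rightarrow> ('x \<Rightarrow> nat) \<Rightarrow> (nat \<Rightarrow> nat) \<Rightarrow> nat \<Rightarrow> 'a set" where
  "Zev M X Y C yhat g z = {\<omega> \<in> space M. Y \<omega> \<in> Yset C yhat g z (X \<omega>)}"

definition condF :: "'a measure \<Rightarrow> ('a \<Rightarrow> 'x) \<Rightarrow> ('a \<Rightarrow> nat) \<Rightarrow> nat \<Rightarrow> ('x \<Rightarrow> nat \<Rightarrow> real) \<Rightarrow> ('x \<Rightarrow> nat) \<Rightarrow> (nat \<Rightarrow> nat) \<Rightarrow> nat \<Rightarrow> real \<Rightarrow> real" where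
  "condF M X Y C s yhat g z t =
     measure M ({\<omega> \<in> space M. s (X \<omega>) (Y \<omega>) \<le> t} \<inter> Zev M X Y C yhat g z)
     / measure M (Zev M X Y C yhat g z)"

end

theory Submission
  imports Defs
begin

text \<open>
  The penalty \<open>\<lambda> d\<close> shifts only the scores of labels outside the predicted group, so
  \<open>P(s\<^sub>\<lambda>(X,Y) \<le> u) = p\<^sub>0 F\<^sub>0(u) + p\<^sub>1 F\<^sub>1(u - \<lambda>)\<close>. Along the quantile curve this equals
  \<open>1 - \<alpha>\<close> for all small \<open>\<lambda> \<ge> 0\<close>; differentiating at \<open>\<lambda> = 0\<close> by the chain rule gives
  \<open>p\<^sub>0 f\<^sub>0(q\<^sub>0) q' + p\<^sub>1 f\<^sub>1(q\<^sub>0) (q' - 1) = 0\<close>, which is solved for \<open>q'\<close>.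
\<close>

lemma has_real_derivative_LINT_atMost:
  fixes f :: "real \<Rightarrow> real"
  assumes f: "integrable lborel f" and cont: "isCont f a"
  shows "((\<lambda>t. LINT x:{..t}|lborel. f x) has_real_derivative f a) (at a)"
proof -
  define c where "c = a - 1"
  have set_int: "set_integrable lborel A f" if "A \<in> sets lborel" for A
    unfolding set_integrable_def using integrable_mult_indicator[OF that f] .
  have "f integrable_on {c..a + 1}"
    using set_borel_integral_eq_integral(1)[OF set_int] by simp
  then have "((\<lambda>u. integral {c..u} f) has_vector_derivative f a) (at a within {c..a + 1})"
    by (rule integral_has_vector_derivative_continuous_at[where S = "{}", simplified])
       (use cont in \<open>auto simp: c_def continuous_at_imp_continuous_within\<close>)
  moreover have "at a within {c..a + 1} = at a"
    by (rule at_within_interior) (simp add: c_def)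
  ultimately have "((\<lambda>u. integral {c..u} f) has_real_derivative f a) (at a)"
    by (simp add: has_real_derivative_iff_has_vector_derivative)
  then have "((\<lambda>u. (LINT x:{..<c}|lborel. f x) + integral {c..u} f) has_real_derivative f a) (at a)"
    using DERIV_add[OF DERIV_const] by fastforce
  then show ?thesis
  proof (rule has_field_derivative_transform_within_open[where S = "{c<..}"])
    fix t assume "t \<in> {c<..}"
    then have "{..t} = {..<c} \<union> {c..t}" "{..<c} \<inter> {c..t} = {}" by auto
    then show "(LINT x:{..<c}|lborel. f x) + integral {c..t} f = (LINT x:{..t}|lborel. f x)"
      using set_integral_Un[of "{..<c}" "{c..t}" lborel f] set_int
        set_borel_integral_eq_integral(2)[OF set_int[of "{c..t}"]] by simp
  qed (auto simp: c_def)
qed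

lemma shifted_level_curve_derivative:
  fixes \<Phi>0 \<Phi>1 q :: "real \<Rightarrow> real"
  assumes level: "\<And>lam. 0 \<le> lam \<Longrightarrow> lam < \<epsilon> \<Longrightarrow> p0 * \<Phi>0 (q lam) + p1 * \<Phi>1 (q lam - lam) = c"
    and "0 < \<epsilon>"
    and \<Phi>0: "(\<Phi>0 has_real_derivative d0) (at (q 0))"
    and \<Phi>1: "(\<Phi>1 has_real_derivative d1) (at (q 0))"
    and q: "(q has_real_derivative D) (at 0 within {0..})"
    and nonzero: "p0 * d0 + p1 * d1 \<noteq> 0"
  shows "D = p1 * d1 / (p0 * d0 + p1 * d1)"
proof -
  have shift: "((\<lambda>lam. q lam - lam) has_real_derivative D - 1) (at 0 within {0..})"
    by (intro derivative_intros q)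
  have \<Phi>1': "(\<Phi>1 has_real_derivative d1) (at (q 0 - 0))"
    using \<Phi>1 by simp
  have "((\<lambda>lam. p0 * \<Phi>0 (q lam) + p1 * \<Phi>1 (q lam - lam)) has_real_derivative
      p0 * (d0 * D) + p1 * (d1 * (D - 1))) (at 0 within {0..})"
    by (intro DERIV_add DERIV_cmult DERIV_chain2[OF \<Phi>0 q] DERIV_chain2[OF \<Phi>1' shift])
  moreover have "((\<lambda>lam. p0 * \<Phi>0 (q lam) + p1 * \<Phi>1 (q lam - lam)) has_real_derivative 0)
      (at 0 within {0..})"
    by (rule has_field_derivative_transform_within[OF DERIV_const \<open>0 < \<epsilon>\<close>]) (auto simp: level)
  ultimately have "p0 * (d0 * D) + p1 * (d1 * (D - 1)) = 0"
    by (rule has_field_derivative_unique)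
       (simp add: at_within_Ici_at_right trivial_limit_at_right_real)
  with nonzero show ?thesis
    by (simp add: field_simps)
qed

locale labelled_scores = prob_space M
  for M :: "'a measure" and N :: "'x measure" and X :: "'a \<Rightarrow> 'x" and Y :: "'a \<Rightarrow> nat"
    and C :: nat and yhat :: "'x \<Rightarrow> nat" and g :: "nat \<Rightarrow> nat" and s :: "'x \<Rightarrow> nat \<Rightarrow> real" +
  assumes X_measurable: "X \<in> measurable M N"
    and Y_measurable: "Y \<in> measurable M (count_space UNIV)"
    and Y_range: "\<And>\<omega>. \<omega> \<in> space M \<Longrightarrow> Y \<omega> \<in> {1..C}"
    and yhat_measurable: "yhat \<in> measurable N (count_space UNIV)"
    and s_measurable: "(\<lambda>(x, y). s x y) \<in> borel_measurable (N \<Otimes>\<^sub>M count_space UNIV)"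
begin

abbreviation Z :: "nat \<Rightarrow> 'a set" where
  "Z \<equiv> Zev M X Y C yhat g"

abbreviation score_le :: "real \<Rightarrow> 'a set" where
  "score_le t \<equiv> {\<omega> \<in> space M. s (X \<omega>) (Y \<omega>) \<le> t}"

lemma Zev_eq: "Z z = {\<omega> \<in> space M. (dgrp g (Y \<omega>) (yhat (X \<omega>)) = 0) = (z = 0)}"
  unfolding Zev_def Yset_def using Y_range by auto

lemma borel_measurable_dgrp: "(\<lambda>\<omega>. dgrp g (Y \<omega>) (yhat (X \<omega>))) \<in> borel_measurable M"
proof (rule measurable_compose_countable[where f = "\<lambda>i \<omega>. dgrp g i (yhat (X \<omega>))", OF _ Y_measurable])
  fix i
  show "(\<lambda>\<omega>. dgrp g i (yhat (X \<omega>))) \<in> borel_measurable M"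
    by (rule measurable_compose_countable[where f = "\<lambda>j \<omega>. dgrp g i j",
          OF _ measurable_compose[OF X_measurable yhat_measurable]]) simp
qed

lemma sets_Zev: "Z z \<in> events"
  unfolding Zev_eq using borel_measurable_dgrp by measurable

lemma borel_measurable_score: "(\<lambda>\<omega>. s (X \<omega>) (Y \<omega>)) \<in> borel_measurable M"
  using measurable_compose[OF measurable_Pair[OF X_measurable Y_measurable] s_measurable]
  by simp

lemma sets_score_le: "score_le t \<in> events"
  using borel_measurable_score by measurable

lemma prob_Zev_1: "prob (Z 1) = 1 - prob (Z 0)"
proof -
  have "Z 1 = space M - Z 0"
    unfolding Zev_eq by auto
  then show ?thesis
    using prob_compl[OF sets_Zev] by simp
qed

lemma prob_score_le_Zev:
  assumes "0 < prob (Z z)"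
  shows "prob (score_le t \<inter> Z z) = prob (Z z) * condF M X Y C s yhat g z t"
  using assms unfolding condF_def by simp

lemma prob_slam_le:
  assumes "0 < prob (Z 0)" "prob (Z 0) < 1"
  shows "prob {\<omega> \<in> space M. slam s yhat g lam (X \<omega>) (Y \<omega>) \<le> u}
    = prob (Z 0) * condF M X Y C s yhat g 0 u + prob (Z 1) * condF M X Y C s yhat g 1 (u - lam)"
proof -
  have "{\<omega> \<in> space M. slam s yhat g lam (X \<omega>) (Y \<omega>) \<le> u}
      = (score_le u \<inter> Z 0) \<union> (score_le (u - lam) \<inter> Z 1)"
    unfolding slam_def Zev_eq by (auto simp: dgrp_def)
  moreover have "prob ((score_le u \<inter> Z 0) \<union> (score_le (u - lam) \<inter> Z 1))
      = prob (score_le u \<inter> Z 0) + prob (score_le (u - lam) \<inter> Z 1)"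
    by (intro finite_measure_Union sets.Int sets_Zev sets_score_le) (auto simp: Zev_eq)
  ultimately show ?thesis
    using assms prob_Zev_1 by (simp add: prob_score_le_Zev)
qed

end

theorem mainTheorem7:
  fixes M :: "'a measure" and N :: "'x measure"
    and X :: "'a \<Rightarrow> 'x" and Y :: "'a \<Rightarrow> nat"
    and C G :: nat and yhat :: "'x \<Rightarrow> nat" and g :: "nat \<Rightarrow> nat"
    and s :: "'x \<Rightarrow> nat \<Rightarrow> real" and \<alpha> :: real
    and f0 f1 :: "real \<Rightarrow> real" and q :: "real \<Rightarrow> real"
  assumes "prob_space M"
    and "X \<in> measurable M N"
    and "Y \<in> measurable M (count_space UNIV)"
    and "\<And>\<omega>. \<omega> \<in> space M \<Longrightarrow> Y \<omega> \<in> {1..C}"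
    and "yhat \<in> measurable N (count_space UNIV)"
    and "\<And>x. x \<in> space N \<Longrightarrow> yhat x \<in> {1..C}"
    and "\<And>y. y \<in> {1..C} \<Longrightarrow> g y \<in> {1..G}"
    and "(\<lambda>(x, y). s x y) \<in> borel_measurable (N \<Otimes>\<^sub>M count_space UNIV)"
    and p0_pos: "0 < measure M (Zev M X Y C yhat g 0)"
    and p0_lt1: "measure M (Zev M X Y C yhat g 0) < 1"
    and "0 < \<alpha>" and "\<alpha> < 1"
    \<comment> \<open>F_z absolutely continuous with density f_z\<close>
    and "\<And>x. 0 \<le> f0 x" and "\<And>x. 0 \<le> f1 x"
    and "f0 \<in> borel_measurable lborel" and "f1 \<in> borel_measurable lborel"
    and f0_int: "integrable lborel f0" and f1_int: "integrable lborel f1"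
    and F0: "\<And>t. condF M X Y C s yhat g 0 t = (LINT x:{..t}|lborel. f0 x)"
    and F1: "\<And>t. condF M X Y C s yhat g 1 t = (LINT x:{..t}|lborel. f1 x)"
    \<comment> \<open>q_lambda defined for small lambda \<ge> 0\<close>
    and quantile: "\<exists>\<epsilon>>0. \<forall>lam. 0 \<le> lam \<and> lam < \<epsilon> \<longrightarrow>
           measure M {\<omega> \<in> space M. slam s yhat g lam (X \<omega>) (Y \<omega>) \<le> q lam} = 1 - \<alpha>"
    and q_diff: "q differentiable (at 0 within {0..})"
    and f0_cont: "isCont f0 (q 0)" and f1_cont: "isCont f1 (q 0)"
    and denom_pos: "measure M (Zev M X Y C yhat g 0) * f0 (q 0)
           + measure M (Zev M X Y C yhat g 1) * f1 (q 0) > 0"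
  shows "(q has_real_derivative
            (measure M (Zev M X Y C yhat g 1) * f1 (q 0) /
             (measure M (Zev M X Y C yhat g 0) * f0 (q 0)
              + measure M (Zev M X Y C yhat g 1) * f1 (q 0))))
         (at 0 within {0..})"
proof -
  interpret labelled_scores M N X Y C yhat g s
    by (intro labelled_scores.intro labelled_scores_axioms.intro assms)
  obtain \<epsilon> where "0 < \<epsilon>" and level: "\<And>lam. 0 \<le> lam \<Longrightarrow> lam < \<epsilon> \<Longrightarrow>
      prob (Z 0) * (LINT x:{..q lam}|lborel. f0 x)
      + prob (Z 1) * (LINT x:{..q lam - lam}|lborel. f1 x) = 1 - \<alpha>"
    using quantile prob_slam_le[OF p0_pos p0_lt1] F0 F1 by metis
  obtain D where D: "(q has_real_derivative D) (at 0 within {0..})"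
    using q_diff real_differentiable_def by blast
  have "D = prob (Z 1) * f1 (q 0) / (prob (Z 0) * f0 (q 0) + prob (Z 1) * f1 (q 0))"
    by (rule shifted_level_curve_derivative[OF level \<open>0 < \<epsilon>\<close>
          has_real_derivative_LINT_atMost has_real_derivative_LINT_atMost D])
       (use f0_int f1_int f0_cont f1_cont denom_pos in auto)
  with D show ?thesis
    by simp
qed

end
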